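(* Let $f(x)=\frac1n\sum_{i=1}^nf_i(x)$ on $\mathbb{R}^d$ where each $f_i$ is convex and lower bounded, and let $x^*$ be a minimizer of $f$. Consider the stochastic subgradient method with the DecSPS-NS stepsize (defined in the context) with $c_k=c_0\sqrt{k+1}$ for some $c_0>0$. Then for every $K\ge1$, $$\mathbb{E}[f(\bar x^K)-f(x^* )]\le\frac{D^2/\gamma_\ell+2\gamma_bG^2}{\sqrt K},$$ where $\bar x^K=\frac1K\sum_{k=0}^{K-1}x^k$, $D^2:=\max_{k\in[K-1]}\|x^k-x^*\|^2$ and $G^2:=\max_{k\in[K-1]}\|g_{\mathcal S_k}(x^k)\|^2$.
   Context: Minibatches: fix a batch size $B$; at each iteration a subset $\mathcal S_k\subseteq[n]$, $|\mathcal S_k|=B$, is sampled uniformly at random, independently across iterations. For $\mathcal S\subseteq[n]$, $f_{\mathcal S}:=\frac1{|\mathcal S|}\sum_{i\in\mathcal S}f_i$, $f^*_{\mathcal S}:=\inf_xf_{\mathcal S}(x)$, $\ell^*_{\mathcal S}$ is a given real number with $\ell^*_{\mathcal S}\le f^*_{\mathcal S}$, and $g_{\mathcal S}(x)$ is a subgradient of $f_{\mathcal S}$ at $x$. Method: $x^{k+1}=x^k-\gamma_kg_{\mathcal S_k}(x^k)$. DecSPS-NS stepsize: $\gamma_k:=\frac1{c_k}\min\left\{\max\left\{c_0\gamma_\ell,\ \frac{f_{\mathcal S_k}(x^k)-\ell^*_{\mathcal S_k}}{\|g_{\mathcal S_k}(x^k)\|^2}\right\},\ c_{k-1}\gamma_{k-1}\right\}$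 for $k\ge0$, with $c_{-1}=c_0$, $\gamma_{-1}=\gamma_b$, where $0<\gamma_\ell\le\gamma_b$ are fixed constants. $[K-1]$ denotes $\{0,\dots,K-1\}$. *)

theory Defs
  imports "HOL-Analysis.Analysis" "HOL-Probability.Probability"
begin

definition fS :: "(nat \<Rightarrow> 'a \<Rightarrow> real) \<Rightarrow> nat set \<Rightarrow> 'a \<Rightarrow> real" where
  "fS fs S x = (\<Sum>i\<in>S. fs i x) / real (card S)"

definition batches :: "nat \<Rightarrow> nat \<Rightarrow> nat set set" where
  "batches n B = {S. S \<subseteq> {..<n} \<and> card S = B}"

definition is_subgradient :: "('a::real_inner \<Rightarrow> real) \<Rightarrow> 'a \<Rightarrow> 'a \<Rightarrow> bool" where
  "is_subgradient F x v \<longleftrightarrow> (\<forall>y. F x + inner v (y - x) \<le> F y)"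

text \<open>The clipped Polyak quantity min(max(c_0 gamma_l, (F_S(x)-l_S)/||g||^2), p),
  where p = c_{k-1} gamma_{k-1}; then gamma_k = (this)/c_k.\<close>
definition decsps_m ::
  "(nat set \<Rightarrow> 'a::real_normed_vector \<Rightarrow> real) \<Rightarrow> (nat set \<Rightarrow> real) \<Rightarrow> (nat set \<Rightarrow> 'a \<Rightarrow> 'a)
   \<Rightarrow> (nat \<Rightarrow> real) \<Rightarrow> real \<Rightarrow> nat set \<Rightarrow> 'a \<Rightarrow> real \<Rightarrow> real" where
  "decsps_m F l g c \<gamma>l S x p =
     min (max (c 0 * \<gamma>l) ((F S x - l S) / (norm (g S x))\<^sup>2)) p"

text \<open>State after k steps: (x^k, c_{k-1} gamma_{k-1}), with c_{-1} gamma_{-1} = c_0 gamma_b.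
  The argument w is the sequence of sampled minibatches S_0, S_1, ...\<close>
fun decsps_state ::
  "(nat set \<Rightarrow> 'a::real_normed_vector \<Rightarrow> real) \<Rightarrow> (nat set \<Rightarrow> real) \<Rightarrow> (nat set \<Rightarrow> 'a \<Rightarrow> 'a)
   \<Rightarrow> (nat \<Rightarrow> real) \<Rightarrow> real \<Rightarrow> real \<Rightarrow> 'a \<Rightarrow> (nat \<Rightarrow> nat set) \<Rightarrow> nat \<Rightarrow> 'a \<times> real" where
  "decsps_state F l g c \<gamma>l \<gamma>b x0 w 0 = (x0, c 0 * \<gamma>b)"
| "decsps_state F l g c \<gamma>l \<gamma>b x0 w (Suc k) =
     (let (x, p) = decsps_state F l g c \<gamma>l \<gamma>b x0 w k;
          m = decsps_m F l g c \<gamma>l (w k) x p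
      in (x - (m / c k) *\<^sub>R g (w k) x, m))"

definition decsps_x ::
  "(nat set \<Rightarrow> 'a::real_normed_vector \<Rightarrow> real) \<Rightarrow> (nat set \<Rightarrow> real) \<Rightarrow> (nat set \<Rightarrow> 'a \<Rightarrow> 'a)
   \<Rightarrow> (nat \<Rightarrow> real) \<Rightarrow> real \<Rightarrow> real \<Rightarrow> 'a \<Rightarrow> (nat \<Rightarrow> nat set) \<Rightarrow> nat \<Rightarrow> 'a" where
  "decsps_x F l g c \<gamma>l \<gamma>b x0 w k = fst (decsps_state F l g c \<gamma>l \<gamma>b x0 w k)"

end

theory Submission
  imports Defs
begin

(* The clipping min {max {c_0 gamma_l, .}, c_(k-1) gamma_(k-1)} alone keeps c_k gamma_k in
   [c_0 gamma_l, c_0 gamma_b] and nonincreasing, so the stepsizes gamma_k are nonincreasing with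
   gamma_l / sqrt (k+1) <= gamma_k <= gamma_b / sqrt (k+1).  Along every sample path, the subgradient
   inequality telescoped against the nondecreasing weights 1/gamma_k gives
   2 sum_k (f_(S_k)(x^k) - f_(S_k)(x* )) <= D^2/gamma_(K-1) + sum_k gamma_k ||g_k||^2
                                       <= sqrt K (D^2/gamma_l + 2 gamma_b G^2).
   Since x^k depends only on S_0, ..., S_(k-1) and a uniformly random minibatch averages f_S to f,
   in expectation f_(S_k) may be replaced by f; Jensen's inequality for the average iterate concludes.
   The values l*_S, the lower bounds of the f_i and the optimality of x* are not needed. *)

lemma subgradient_step_inequality:
  fixes x v z :: "'a::real_inner"
  assumes "is_subgradient F x v" and "0 < t"
  shows "2 * (F x - F z) \<le> ((norm (x - z))\<^sup>2 - (norm (x - t *\<^sub>R v - z))\<^sup>2) / t + t * (norm v)\<^sup>2"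
proof -
  have "(norm (x - t *\<^sub>R v - z))\<^sup>2 = (norm (x - z))\<^sup>2 - 2 * t * inner v (x - z) + t\<^sup>2 * (norm v)\<^sup>2"
    unfolding power2_norm_eq_inner
    by (simp add: inner_diff_left inner_diff_right inner_commute power2_eq_square algebra_simps)
  then have "((norm (x - z))\<^sup>2 - (norm (x - t *\<^sub>R v - z))\<^sup>2) / t + t * (norm v)\<^sup>2 = 2 * inner v (x - z)"
    using \<open>0 < t\<close> by (simp add: field_simps power2_eq_square)
  moreover have "F x - F z \<le> inner v (x - z)"
    using assms(1)[unfolded is_subgradient_def, rule_format, of z] by (simp add: inner_diff_right)
  ultimately show ?thesis
    by simp
qed

lemma weighted_telescope_le:
  fixes r a :: "nat \<Rightarrow> real"
  assumes "\<And>k. r k \<le> r (Suc k)" and "\<And>k. 0 \<le> r k" and "\<forall>k<K. a k \<le> M" and "1 \<le> K"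
  shows "(\<Sum>k<K. r k * (a k - a (Suc k))) \<le> r (K - 1) * (M - a K)"
  using assms(3,4)
proof (induction K)
  case 0
  then show ?case by simp
next
  case (Suc K)
  show ?case
  proof (cases "K = 0")
    case True
    then show ?thesis using Suc.prems assms(2)[of 0] by (simp add: mult_left_mono)
  next
    case False
    then have "(\<Sum>k<K. r k * (a k - a (Suc k))) \<le> r (K - 1) * (M - a K)"
      using Suc by simp
    moreover have "r (K - 1) * (M - a K) \<le> r K * (M - a K)"
      using Suc.prems assms(1)[of "K - 1"] False by (intro mult_right_mono) auto
    ultimately show ?thesis by (simp add: algebra_simps)
  qed
qed

lemma subgradient_method_regret:
  fixes X v :: "nat \<Rightarrow> 'a::real_inner"
  assumes step: "\<And>k. X (Suc k) = X k - \<gamma> k *\<^sub>R v k"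
    and subgrad: "\<forall>k<K. is_subgradient (F k) (X k) (v k)"
    and pos: "\<And>k. 0 < \<gamma> k" and antimono: "\<And>k. \<gamma> (Suc k) \<le> \<gamma> k"
    and dist: "\<forall>k<K. (norm (X k - z))\<^sup>2 \<le> D" and "1 \<le> K"
  shows "2 * (\<Sum>k<K. F k (X k) - F k z) \<le> D / \<gamma> (K - 1) + (\<Sum>k<K. \<gamma> k * (norm (v k))\<^sup>2)"
proof -
  define a where "a k = (norm (X k - z))\<^sup>2" for k
  have "(\<Sum>k<K. (a k - a (Suc k)) / \<gamma> k) = (\<Sum>k<K. (1 / \<gamma> k) * (a k - a (Suc k)))"
    by simp
  also have "\<dots> \<le> (1 / \<gamma> (K - 1)) * (D - a K)"
    using dist \<open>1 \<le> K\<close> pos antimono unfolding a_def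
    by (intro weighted_telescope_le) (auto intro: frac_le less_imp_le)
  also have "\<dots> \<le> D / \<gamma> (K - 1)"
    using pos[of "K - 1"] unfolding a_def by (simp add: divide_right_mono)
  finally have "(\<Sum>k<K. (a k - a (Suc k)) / \<gamma> k) \<le> D / \<gamma> (K - 1)" .
  moreover have "2 * (\<Sum>k<K. F k (X k) - F k z) \<le> (\<Sum>k<K. (a k - a (Suc k)) / \<gamma> k + \<gamma> k * (norm (v k))\<^sup>2)"
    unfolding sum_distrib_left a_def step
    using subgrad pos by (intro sum_mono subgradient_step_inequality) auto
  ultimately show ?thesis by (simp add: sum.distrib)
qed

lemma sum_inverse_sqrt_le: "(\<Sum>k<K. 1 / sqrt (real k + 1)) \<le> 2 * sqrt (real K)"
proof (induction K)
  case 0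
  then show ?case by simp
next
  case (Suc K)
  have "2 * sqrt (real K) * sqrt (real K + 1) \<le> 2 * real K + 1"
    using arith_geo_mean_sqrt[of "real K" "real K + 1"] by (simp add: real_sqrt_mult)
  then have "2 * sqrt (real K) + 1 / sqrt (real K + 1) \<le> 2 * sqrt (real K + 1)"
    by (simp add: field_simps)
  then show ?case using Suc by (simp add: add.commute)
qed

lemma subgradient_method_regret_sqrt:
  fixes X v :: "nat \<Rightarrow> 'a::real_inner"
  assumes step: "\<And>k. X (Suc k) = X k - \<gamma> k *\<^sub>R v k"
    and subgrad: "\<forall>k<K. is_subgradient (F k) (X k) (v k)"
    and lower: "\<And>k. \<gamma>l / sqrt (real k + 1) \<le> \<gamma> k" and upper: "\<And>k. \<gamma> k \<le> \<gamma>b / sqrt (real k + 1)"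
    and antimono: "\<And>k. \<gamma> (Suc k) \<le> \<gamma> k" and "0 < \<gamma>l"
    and dist: "\<forall>k<K. (norm (X k - z))\<^sup>2 \<le> D" and grad: "\<forall>k<K. (norm (v k))\<^sup>2 \<le> G" and "1 \<le> K"
  shows "2 * (\<Sum>k<K. F k (X k) - F k z) \<le> sqrt (real K) * (D / \<gamma>l + 2 * \<gamma>b * G)"
proof -
  have pos: "0 < \<gamma> k" for k
  proof -
    have "0 < \<gamma>l / sqrt (real k + 1)"
      using \<open>0 < \<gamma>l\<close> by simp
    then show ?thesis
      using lower[of k] by linarith
  qed
  have "0 \<le> D" and "0 \<le> G"
    using dist grad \<open>1 \<le> K\<close> by (meson less_le_trans order_trans zero_le_power2 zero_less_one)+
  have "\<gamma>l / sqrt (real K) \<le> \<gamma> (K - 1)"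
    using lower[of "K - 1"] \<open>1 \<le> K\<close> by (simp add: of_nat_diff)
  then have "D / \<gamma> (K - 1) \<le> D / (\<gamma>l / sqrt (real K))"
    using \<open>0 \<le> D\<close> \<open>0 < \<gamma>l\<close> \<open>1 \<le> K\<close> by (intro divide_left_mono) (auto simp: pos)
  then have distance_term: "D / \<gamma> (K - 1) \<le> sqrt (real K) * (D / \<gamma>l)"
    by (simp add: mult.commute)
  have "(\<Sum>k<K. \<gamma> k * (norm (v k))\<^sup>2) \<le> (\<Sum>k<K. \<gamma>b * G * (1 / sqrt (real k + 1)))"
  proof (rule sum_mono)
    fix k assume "k \<in> {..<K}"
    then have "\<gamma> k * (norm (v k))\<^sup>2 \<le> \<gamma>b / sqrt (real k + 1) * G"
      using grad upper[of k] pos[of k] \<open>0 \<le> G\<close> by (intro mult_mono) auto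
    then show "\<gamma> k * (norm (v k))\<^sup>2 \<le> \<gamma>b * G * (1 / sqrt (real k + 1))"
      by simp
  qed
  also have "\<dots> \<le> \<gamma>b * G * (2 * sqrt (real K))"
    unfolding sum_distrib_left[symmetric]
    using sum_inverse_sqrt_le[of K] upper[of 0] pos[of 0] \<open>0 \<le> G\<close> by (intro mult_left_mono) auto
  finally have gradient_term: "(\<Sum>k<K. \<gamma> k * (norm (v k))\<^sup>2) \<le> sqrt (real K) * (2 * \<gamma>b * G)"
    by (simp add: algebra_simps)
  show ?thesis
    using subgradient_method_regret[OF step subgrad pos antimono dist \<open>1 \<le> K\<close>] distance_term gradient_term
    by (simp add: algebra_simps)
qed

definition decsps_stepsize ::
  "(nat set \<Rightarrow> 'a::real_normed_vector \<Rightarrow> real) \<Rightarrow> (nat set \<Rightarrow> real) \<Rightarrow> (nat set \<Rightarrow> 'a \<Rightarrow> 'a)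
   \<Rightarrow> (nat \<Rightarrow> real) \<Rightarrow> real \<Rightarrow> real \<Rightarrow> 'a \<Rightarrow> (nat \<Rightarrow> nat set) \<Rightarrow> nat \<Rightarrow> real" where
  "decsps_stepsize F l g c \<gamma>l \<gamma>b x0 w k = snd (decsps_state F l g c \<gamma>l \<gamma>b x0 w (Suc k)) / c k"

lemma decsps_state_prefix:
  "(\<forall>j<k. w j = w' j) \<Longrightarrow> decsps_state F l g c \<gamma>l \<gamma>b x0 w k = decsps_state F l g c \<gamma>l \<gamma>b x0 w' k"
  by (induction k) (auto simp: Let_def split_beta)

lemma decsps_x_Suc:
  "decsps_x F l g c \<gamma>l \<gamma>b x0 w (Suc k) = decsps_x F l g c \<gamma>l \<gamma>b x0 w k
     - decsps_stepsize F l g c \<gamma>l \<gamma>b x0 w k *\<^sub>R g (w k) (decsps_x F l g c \<gamma>l \<gamma>b x0 w k)"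
  by (simp add: decsps_x_def decsps_stepsize_def Let_def split_beta)

lemma decsps_state_snd_Suc_le:
  "snd (decsps_state F l g c \<gamma>l \<gamma>b x0 w (Suc k)) \<le> snd (decsps_state F l g c \<gamma>l \<gamma>b x0 w k)"
  by (simp add: decsps_m_def Let_def split_beta)

lemma decsps_state_snd_bounds:
  assumes "\<gamma>l \<le> \<gamma>b" and "0 \<le> c 0"
  shows "c 0 * \<gamma>l \<le> snd (decsps_state F l g c \<gamma>l \<gamma>b x0 w k)
    \<and> snd (decsps_state F l g c \<gamma>l \<gamma>b x0 w k) \<le> c 0 * \<gamma>b"
proof (induction k)
  case 0
  then show ?case using assms by (simp add: mult_left_mono)
next
  case (Suc k)
  then show ?case
    using mult_left_mono[OF assms] decsps_state_snd_Suc_le[of F l g c \<gamma>l \<gamma>b x0 w k]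
    by (simp add: decsps_m_def Let_def split_beta min.coboundedI2)
qed

lemma decsps_stepsize_bounds:
  assumes "\<gamma>l \<le> \<gamma>b" and "0 \<le> c 0" and "0 < c k"
  shows "c 0 * \<gamma>l / c k \<le> decsps_stepsize F l g c \<gamma>l \<gamma>b x0 w k"
    and "decsps_stepsize F l g c \<gamma>l \<gamma>b x0 w k \<le> c 0 * \<gamma>b / c k"
  using decsps_state_snd_bounds[of \<gamma>l \<gamma>b c F l g x0 w "Suc k", OF assms(1,2)] assms(3)
  unfolding decsps_stepsize_def by (simp_all add: divide_right_mono)

lemma decsps_stepsize_Suc_le:
  assumes "c k \<le> c (Suc k)" and "0 < c k"
    and "0 \<le> snd (decsps_state F l g c \<gamma>l \<gamma>b x0 w (Suc (Suc k)))"
  shows "decsps_stepsize F l g c \<gamma>l \<gamma>b x0 w (Suc k) \<le> decsps_stepsize F l g c \<gamma>l \<gamma>b x0 w k"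
  unfolding decsps_stepsize_def
  using assms decsps_state_snd_Suc_le[of F l g c \<gamma>l \<gamma>b x0 w "Suc k"] by (intro frac_le) auto

lemma decsps_sqrt_stepsize_bounds:
  fixes F :: "nat set \<Rightarrow> 'a::real_normed_vector \<Rightarrow> real" and l :: "nat set \<Rightarrow> real"
    and g :: "nat set \<Rightarrow> 'a \<Rightarrow> 'a" and x0 :: 'a and w :: "nat \<Rightarrow> nat set"
  assumes "0 < c0" and "0 < \<gamma>l" and "\<gamma>l \<le> \<gamma>b"
  defines "\<gamma> \<equiv> decsps_stepsize F l g (\<lambda>k. c0 * sqrt (real k + 1)) \<gamma>l \<gamma>b x0 w"
  shows "\<gamma>l / sqrt (real k + 1) \<le> \<gamma> k" and "\<gamma> k \<le> \<gamma>b / sqrt (real k + 1)"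
    and "\<gamma> (Suc k) \<le> \<gamma> k"
proof -
  define c where "c = (\<lambda>k::nat. c0 * sqrt (real k + 1))"
  have c_pos: "0 < c k" for k
    using \<open>0 < c0\<close> by (simp add: c_def)
  show "\<gamma>l / sqrt (real k + 1) \<le> \<gamma> k"
    using decsps_stepsize_bounds(1)[of \<gamma>l \<gamma>b c k F l g x0 w, OF \<open>\<gamma>l \<le> \<gamma>b\<close> _ c_pos] \<open>0 < c0\<close>
    by (simp add: \<gamma>_def c_def)
  show "\<gamma> k \<le> \<gamma>b / sqrt (real k + 1)"
    using decsps_stepsize_bounds(2)[of \<gamma>l \<gamma>b c k F l g x0 w, OF \<open>\<gamma>l \<le> \<gamma>b\<close> _ c_pos] \<open>0 < c0\<close>
    by (simp add: \<gamma>_def c_def)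
  show "\<gamma> (Suc k) \<le> \<gamma> k"
    unfolding \<gamma>_def c_def[symmetric]
  proof (rule decsps_stepsize_Suc_le[OF _ c_pos])
    show "c k \<le> c (Suc k)"
      using \<open>0 < c0\<close> by (simp add: c_def)
    have "0 < c 0 * \<gamma>l"
      using \<open>0 < c0\<close> \<open>0 < \<gamma>l\<close> by (simp add: c_def)
    then show "0 \<le> snd (decsps_state F l g c \<gamma>l \<gamma>b x0 w (Suc (Suc k)))"
      using decsps_state_snd_bounds[of \<gamma>l \<gamma>b c F l g x0 w "Suc (Suc k)"] \<open>\<gamma>l \<le> \<gamma>b\<close> c_pos[of 0]
      by linarith
  qed
qed

lemma decsps_regret:
  fixes F :: "nat set \<Rightarrow> 'a::real_inner \<Rightarrow> real" and g :: "nat set \<Rightarrow> 'a \<Rightarrow> 'a"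
    and l :: "nat set \<Rightarrow> real" and x0 z :: 'a and w :: "nat \<Rightarrow> nat set"
  assumes "0 < c0" and "0 < \<gamma>l" and "\<gamma>l \<le> \<gamma>b" and "1 \<le> K"
  defines "X \<equiv> decsps_x F l g (\<lambda>k. c0 * sqrt (real k + 1)) \<gamma>l \<gamma>b x0 w"
  assumes subgrad: "\<forall>k<K. is_subgradient (F (w k)) (X k) (g (w k) (X k))"
    and dist: "\<forall>k<K. (norm (X k - z))\<^sup>2 \<le> D"
    and grad: "\<forall>k<K. (norm (g (w k) (X k)))\<^sup>2 \<le> G"
  shows "(\<Sum>k<K. F (w k) (X k) - F (w k) z) / real K \<le> (D / \<gamma>l + 2 * \<gamma>b * G) / (2 * sqrt (real K))"
proof -
  have "X (Suc k) = X k - decsps_stepsize F l g (\<lambda>k. c0 * sqrt (real k + 1)) \<gamma>l \<gamma>b x0 w k *\<^sub>R g (w k) (X k)"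
    for k
    unfolding X_def by (rule decsps_x_Suc)
  from subgradient_method_regret_sqrt[OF this subgrad decsps_sqrt_stepsize_bounds[OF assms(1-3)]
      \<open>0 < \<gamma>l\<close> dist grad \<open>1 \<le> K\<close>]
  have "(\<Sum>k<K. F (w k) (X k) - F (w k) z) / real K
      \<le> sqrt (real K) * (D / \<gamma>l + 2 * \<gamma>b * G) / 2 / real K"
    by (intro divide_right_mono) simp_all
  also have "\<dots> = (D / \<gamma>l + 2 * \<gamma>b * G) / (2 * sqrt (real K))"
  proof -
    define s where "s = sqrt (real K)"
    have "real K = s\<^sup>2" and "0 < s"
      using \<open>1 \<le> K\<close> by (simp_all add: s_def)
    then show ?thesis
      unfolding s_def[symmetric] by (simp only: \<open>real K = s\<^sup>2\<close>) (simp add: field_simps power2_eq_square)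
  qed
  finally show ?thesis .
qed

lemma finite_batches: "finite (batches n B)"
  unfolding batches_def by (rule finite_subset[of _ "Pow {..<n}"]) auto

lemma batches_nonempty: "B \<le> n \<Longrightarrow> batches n B \<noteq> {}"
  unfolding batches_def by (rule ex_in_conv[THEN iffD1]) (auto intro!: exI[of _ "{..<B}"])

lemma card_batches: "card (batches n B) = n choose B"
  unfolding batches_def using n_subsets[of "{..<n}" B] by simp

lemma card_batches_containing:
  assumes "i < n" and "1 \<le> B"
  shows "card {S \<in> batches n B. i \<in> S} = (n - 1) choose (B - 1)"
proof -
  have "bij_betw (\<lambda>S. S - {i}) {S \<in> batches n B. i \<in> S} {T. T \<subseteq> {..<n} - {i} \<and> card T = B - 1}"
  proof (rule bij_betw_byWitness[where f' = "insert i"])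
    show "\<forall>S\<in>{S \<in> batches n B. i \<in> S}. insert i (S - {i}) = S"
      by auto
    show "\<forall>T\<in>{T. T \<subseteq> {..<n} - {i} \<and> card T = B - 1}. insert i T - {i} = T"
      by auto
    show "(\<lambda>S. S - {i}) ` {S \<in> batches n B. i \<in> S} \<subseteq> {T. T \<subseteq> {..<n} - {i} \<and> card T = B - 1}"
      unfolding batches_def by (auto simp: finite_subset)
    show "insert i ` {T. T \<subseteq> {..<n} - {i} \<and> card T = B - 1} \<subseteq> {S \<in> batches n B. i \<in> S}"
      using assms unfolding batches_def by (auto simp: card_insert_if finite_subset)
  qed
  then have "card {S \<in> batches n B. i \<in> S} = card ({..<n} - {i}) choose (B - 1)"
    by (simp add: bij_betw_same_card n_subsets)
  then show ?thesis
    using assms by simp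
qed

lemma sum_batches_fS:
  assumes "1 \<le> B" and "B \<le> n"
  shows "(\<Sum>S\<in>batches n B. fS fs S x) = real (card (batches n B)) * fS fs {..<n} x"
proof -
  have "(\<Sum>i<n. if i \<in> S then fs i x else 0) = (\<Sum>i\<in>S. fs i x)" if "S \<subseteq> {..<n}" for S
    using that by (simp flip: sum.inter_restrict add: inf.absorb2)
  then have "(\<Sum>S\<in>batches n B. fS fs S x) = (\<Sum>S\<in>batches n B. (\<Sum>i<n. if i \<in> S then fs i x else 0) / real B)"
    by (intro sum.cong refl) (simp add: batches_def fS_def)
  also have "\<dots> = (\<Sum>S\<in>batches n B. \<Sum>i<n. if i \<in> S then fs i x else 0) / real B"
    by (rule sum_divide_distrib[symmetric])
  also have "(\<Sum>S\<in>batches n B. \<Sum>i<n. if i \<in> S then fs i x else 0)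
      = (\<Sum>i<n. fs i x * real (card {S \<in> batches n B. i \<in> S}))"
    by (subst sum.swap) (simp add: sum.inter_filter[OF finite_batches, symmetric] mult.commute)
  also have "\<dots> = (\<Sum>i<n. fs i x) * real ((n - 1) choose (B - 1))"
    using assms(1) by (simp add: card_batches_containing sum_distrib_right)
  also have "real B * real (n choose B) = real n * real ((n - 1) choose (B - 1))"
    using binomial_absorption[of "B - 1" n] assms(1) by (simp flip: of_nat_mult)
  then have "real ((n - 1) choose (B - 1)) = real B * real (n choose B) / real n"
    using assms by (simp add: field_simps)
  finally show ?thesis
    using assms by (simp add: card_batches fS_def)
qed

lemma sum_PiE_coordinate_average:
  fixes \<Phi> :: "'b \<Rightarrow> ('a \<Rightarrow> 'b) \<Rightarrow> real"
  assumes "k \<in> I" and "finite A"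
    and indep: "\<And>S w w'. (\<forall>j\<in>I - {k}. w j = w' j) \<Longrightarrow> \<Phi> S w = \<Phi> S w'"
  shows "real (card A) * (\<Sum>w\<in>PiE I (\<lambda>_. A). \<Phi> (w k) w) = (\<Sum>w\<in>PiE I (\<lambda>_. A). \<Sum>S\<in>A. \<Phi> S w)"
proof -
  define J where "J = I - {k}"
  have I: "I = insert k J" and "k \<notin> J"
    using assms(1) by (auto simp: J_def)
  have reindex: "(\<Sum>w\<in>PiE I (\<lambda>_. A). h w) = (\<Sum>S\<in>A. \<Sum>u\<in>PiE J (\<lambda>_. A). h (u(k := S)))" for h
    unfolding I PiE_insert_eq
    by (subst sum.reindex[OF inj_combinator[OF \<open>k \<notin> J\<close>]]) (simp add: sum.cartesian_product case_prod_beta)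
  have update: "\<Phi> S (u(k := S')) = \<Phi> S u" for S S' u
    by (rule indep) (simp add: J_def)
  show ?thesis
    unfolding reindex update by (simp add: sum.swap[of _ A] sum_distrib_left)
qed

lemma sum_PiE_batches_fS:
  assumes "1 \<le> B" and "B \<le> n" and "k \<in> I"
    and indep: "\<And>w w'. (\<forall>j\<in>I - {k}. w j = w' j) \<Longrightarrow> Y w = Y w'"
  shows "(\<Sum>w\<in>PiE I (\<lambda>_. batches n B). fS fs (w k) (Y w))
    = (\<Sum>w\<in>PiE I (\<lambda>_. batches n B). fS fs {..<n} (Y w))"
proof -
  have "real (card (batches n B)) * (\<Sum>w\<in>PiE I (\<lambda>_. batches n B). fS fs (w k) (Y w))
      = (\<Sum>w\<in>PiE I (\<lambda>_. batches n B). \<Sum>S\<in>batches n B. fS fs S (Y w))"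
    using indep by (intro sum_PiE_coordinate_average[OF \<open>k \<in> I\<close> finite_batches]) metis
  also have "\<dots> = real (card (batches n B)) * (\<Sum>w\<in>PiE I (\<lambda>_. batches n B). fS fs {..<n} (Y w))"
    using assms(1,2) by (simp add: sum_batches_fS sum_distrib_left)
  finally show ?thesis
    using finite_batches batches_nonempty[OF \<open>B \<le> n\<close>] by (simp add: card_gt_0_iff)
qed

lemma decsps_expected_gap:
  fixes fs :: "nat \<Rightarrow> 'a::real_normed_vector \<Rightarrow> real" and l :: "nat set \<Rightarrow> real"
    and g :: "nat set \<Rightarrow> 'a \<Rightarrow> 'a" and c :: "nat \<Rightarrow> real" and \<gamma>l \<gamma>b :: real and x0 :: 'a
  assumes "1 \<le> B" and "B \<le> n" and "k < K"
  defines "X \<equiv> decsps_x (fS fs) l g c \<gamma>l \<gamma>b x0"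
  shows "(\<Sum>w\<in>PiE {..<K} (\<lambda>_. batches n B). fS fs {..<n} (X w k) - fS fs {..<n} z)
    = (\<Sum>w\<in>PiE {..<K} (\<lambda>_. batches n B). fS fs (w k) (X w k) - fS fs (w k) z)"
proof -
  have "X w k = X w' k" if "\<forall>j\<in>{..<K} - {k}. w j = w' j" for w w'
  proof -
    have "\<forall>j<k. w j = w' j"
      using that \<open>k < K\<close> by auto
    then show ?thesis
      unfolding X_def decsps_x_def by (simp only: decsps_state_prefix)
  qed
  then show ?thesis
    using sum_PiE_batches_fS[OF assms(1,2), of k "{..<K}" "\<lambda>w. X w k" fs]
      sum_PiE_batches_fS[OF assms(1,2), of k "{..<K}" "\<lambda>_. z" fs] \<open>k < K\<close>
    by (simp add: sum_subtractf)
qed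

lemma convex_on_fS:
  assumes "finite S" and "\<forall>i\<in>S. convex_on UNIV (fs i)"
  shows "convex_on UNIV (fS fs S)"
proof -
  have "convex_on UNIV (\<lambda>x. \<Sum>i\<in>S. fs i x)"
    using assms by (induction S rule: finite_induct) (auto simp: convex_on_const)
  then show ?thesis
    unfolding fS_def[abs_def] by (simp add: convex_on_cdiv)
qed

lemma convex_on_mean_le:
  fixes x :: "nat \<Rightarrow> 'a::real_vector"
  assumes "convex_on UNIV f" and "1 \<le> K"
  shows "f ((1 / real K) *\<^sub>R (\<Sum>k<K. x k)) \<le> (\<Sum>k<K. f (x k)) / real K"
proof -
  have "f (\<Sum>k<K. (1 / real K) *\<^sub>R x k) \<le> (\<Sum>k<K. (1 / real K) * f (x k))"
    using assms by (intro convex_on_sum) (auto simp: lessThan_empty_iff)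
  then show ?thesis
    by (simp add: scaleR_sum_right sum_divide_distrib)
qed

lemma decsps_expected_average_gap:
  fixes fs :: "nat \<Rightarrow> 'a::real_normed_vector \<Rightarrow> real" and l :: "nat set \<Rightarrow> real"
    and g :: "nat set \<Rightarrow> 'a \<Rightarrow> 'a" and c :: "nat \<Rightarrow> real" and \<gamma>l \<gamma>b :: real and x0 z :: 'a
  assumes "1 \<le> B" and "B \<le> n" and "1 \<le> K" and "\<forall>i<n. convex_on UNIV (fs i)"
  defines "X \<equiv> decsps_x (fS fs) l g c \<gamma>l \<gamma>b x0"
    and "\<Omega> \<equiv> PiE {..<K} (\<lambda>_. batches n B)"
  shows "(\<Sum>w\<in>\<Omega>. fS fs {..<n} ((1 / real K) *\<^sub>R (\<Sum>k<K. X w k)) - fS fs {..<n} z)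
    \<le> (\<Sum>w\<in>\<Omega>. (\<Sum>k<K. fS fs (w k) (X w k) - fS fs (w k) z) / real K)"
proof -
  define f where "f = fS fs {..<n}"
  have swap: "(\<Sum>w\<in>\<Omega>. (\<Sum>k<K. h w k) / real K) = (\<Sum>k<K. \<Sum>w\<in>\<Omega>. h w k) / real K" for h
    by (simp add: sum_divide_distrib[symmetric] sum.swap[of _ \<Omega>])
  have "f ((1 / real K) *\<^sub>R (\<Sum>k<K. X w k)) - f z \<le> (\<Sum>k<K. f (X w k) - f z) / real K" for w
    using convex_on_mean_le[OF convex_on_fS[of "{..<n}" fs] \<open>1 \<le> K\<close>, of "X w"] assms(4) \<open>1 \<le> K\<close>
    by (simp add: f_def sum_subtractf diff_divide_distrib)
  then have "(\<Sum>w\<in>\<Omega>. f ((1 / real K) *\<^sub>R (\<Sum>k<K. X w k)) - f z)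
      \<le> (\<Sum>w\<in>\<Omega>. (\<Sum>k<K. f (X w k) - f z) / real K)"
    by (rule sum_mono)
  also have "\<dots> = (\<Sum>k<K. \<Sum>w\<in>\<Omega>. f (X w k) - f z) / real K"
    by (rule swap)
  also have "\<dots> = (\<Sum>k<K. \<Sum>w\<in>\<Omega>. fS fs (w k) (X w k) - fS fs (w k) z) / real K"
    unfolding f_def \<Omega>_def X_def
    by (intro arg_cong[where f = "\<lambda>t. t / real K"] sum.cong refl decsps_expected_gap[OF assms(1,2)]) simp
  also have "\<dots> = (\<Sum>w\<in>\<Omega>. (\<Sum>k<K. fS fs (w k) (X w k) - fS fs (w k) z) / real K)"
    by (rule swap[symmetric])
  finally show ?thesis
    unfolding f_def .
qed

theorem corollary3:
  fixes fs :: "nat \<Rightarrow> real^'d \<Rightarrow> real"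
    and n B K :: nat
    and lstar :: "nat set \<Rightarrow> real"
    and g :: "nat set \<Rightarrow> real^'d \<Rightarrow> real^'d"
    and xstar x0 :: "real^'d"
    and c0 \<gamma>l \<gamma>b :: real
  assumes "1 \<le> B" and "B \<le> n"
    and "\<forall>i<n. convex_on UNIV (fs i)"
    and "\<forall>i<n. bdd_below (range (fs i))"
    and "\<forall>y. fS fs {..<n} xstar \<le> fS fs {..<n} y"
    and "\<forall>S\<in>batches n B. lstar S \<le> (INF x. fS fs S x)"
    and "\<forall>S\<in>batches n B. \<forall>x. is_subgradient (fS fs S) x (g S x)"
    and "0 < c0" and "0 < \<gamma>l" and "\<gamma>l \<le> \<gamma>b"
    and "1 \<le> K"
  shows
    "let X = decsps_x (fS fs) lstar g (\<lambda>k. c0 * sqrt (real k + 1)) \<gamma>l \<gamma>b x0;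
         P = pmf_of_set (PiE {..<K} (\<lambda>_. batches n B));
         xbar = (\<lambda>w. (1 / real K) *\<^sub>R (\<Sum>k<K. X w k));
         D2 = (\<lambda>w. Max ((\<lambda>k. (norm (X w k - xstar))\<^sup>2) ` {..<K}));
         G2 = (\<lambda>w. Max ((\<lambda>k. (norm (g (w k) (X w k)))\<^sup>2) ` {..<K}))
     in measure_pmf.expectation P (\<lambda>w. fS fs {..<n} (xbar w) - fS fs {..<n} xstar)
        \<le> measure_pmf.expectation P (\<lambda>w. D2 w / \<gamma>l + 2 * \<gamma>b * G2 w) / sqrt (real K)"
proof -
  define X where "X = decsps_x (fS fs) lstar g (\<lambda>k. c0 * sqrt (real k + 1)) \<gamma>l \<gamma>b x0"
  define \<Omega> where "\<Omega> = PiE {..<K} (\<lambda>_. batches n B)"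
  define D2 where "D2 w = Max ((\<lambda>k. (norm (X w k - xstar))\<^sup>2) ` {..<K})" for w
  define G2 where "G2 w = Max ((\<lambda>k. (norm (g (w k) (X w k)))\<^sup>2) ` {..<K})" for w
  define R where "R w = D2 w / \<gamma>l + 2 * \<gamma>b * G2 w" for w
  have "finite \<Omega>" and "\<Omega> \<noteq> {}"
    using finite_batches batches_nonempty[OF \<open>B \<le> n\<close>] by (auto simp: \<Omega>_def PiE_eq_empty_iff finite_PiE)
  have R_nonneg: "0 \<le> R w" for w
  proof -
    have "0 \<le> D2 w" and "0 \<le> G2 w"
      using \<open>1 \<le> K\<close> unfolding D2_def G2_def
      by (subst Max_ge_iff; auto simp: lessThan_empty_iff intro: exI[of _ 0])+
    then show ?thesis
      using \<open>0 < \<gamma>l\<close> \<open>\<gamma>l \<le> \<gamma>b\<close> by (simp add: R_def)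
  qed
  have regret: "(\<Sum>k<K. fS fs (w k) (X w k) - fS fs (w k) xstar) / real K \<le> R w / sqrt (real K)"
    if "w \<in> \<Omega>" for w
  proof -
    have "(\<Sum>k<K. fS fs (w k) (X w k) - fS fs (w k) xstar) / real K \<le> R w / (2 * sqrt (real K))"
      unfolding R_def D2_def G2_def X_def
      using that assms(7-11) by (intro decsps_regret) (auto simp: \<Omega>_def)
    also have "\<dots> \<le> R w / sqrt (real K)"
      using R_nonneg[of w] \<open>1 \<le> K\<close> by (intro divide_left_mono) auto
    finally show ?thesis .
  qed
  have "(\<Sum>w\<in>\<Omega>. fS fs {..<n} ((1 / real K) *\<^sub>R (\<Sum>k<K. X w k)) - fS fs {..<n} xstar)
      \<le> (\<Sum>w\<in>\<Omega>. (\<Sum>k<K. fS fs (w k) (X w k) - fS fs (w k) xstar) / real K)"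
    unfolding X_def \<Omega>_def by (rule decsps_expected_average_gap[OF assms(1,2,11,3)])
  also have "\<dots> \<le> (\<Sum>w\<in>\<Omega>. R w / sqrt (real K))"
    using regret by (rule sum_mono)
  finally have "(\<Sum>w\<in>\<Omega>. fS fs {..<n} ((1 / real K) *\<^sub>R (\<Sum>k<K. X w k)) - fS fs {..<n} xstar) / real (card \<Omega>)
      \<le> (\<Sum>w\<in>\<Omega>. R w / sqrt (real K)) / real (card \<Omega>)"
    by (rule divide_right_mono) simp
  then show ?thesis
    unfolding Let_def X_def[symmetric] \<Omega>_def[symmetric] D2_def[symmetric] G2_def[symmetric]
      integral_pmf_of_set[OF \<open>\<Omega> \<noteq> {}\<close> \<open>finite \<Omega>\<close>]
    by (simp add: R_def sum_divide_distrib[symmetric] mult.commute)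
qed

end
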